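(* Let $m,a\in\mathbb N$ and let $\mathfrak o$ be a compact discrete valuation ring. Let $V^*_{m,a}(\mathfrak o)$ be the $\mathfrak o$-representation of the dual star quiver $\mathsf S^*_a$ in which every vertex is represented by $\mathfrak o^m$ and every arrow by the identity map. Then $$\zeta_{V^*_{m,a}(\mathfrak o)}(s)=\zeta_{\mathfrak o^m}(as)\,\zeta_{\mathfrak o^m}(s)^{a-1}.$$
   Context: The dual star quiver $\mathsf S^*_a$ has vertices $v_1,\dots,v_a$ and arrows $v_j\to v_1$ for $j=2,\dots,a$. Subrepresentations of a representation $(\mathcal L_\iota,f_\phi)$ are tuples of submodules $\Lambda_\iota\le\mathcal L_\iota$ with $f_\phi(\Lambda_{\mathrm{tail}(\phi)})\subseteq\Lambda_{\mathrm{head}(\phi)}$, and $\zeta_V(s)=\sum_{V'}\prod_\iota|\mathcal L_\iota:\Lambda_\iota|^{-s}$ over finite-index subrepresentations. $\zeta_{\mathfrak o^m}(s)=\sum_{U}|\mathfrak o^m:U|^{-s}$ sums over all $\mathfrak o$-submodules $U$ of finite index in $\mathfrak o^m$. *)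

theory Defs
  imports "HOL-Analysis.Analysis"
begin

definition uniformizer :: "'a::idom \<Rightarrow> bool" where
  "uniformizer p \<longleftrightarrow> p \<noteq> 0 \<and> \<not> p dvd 1 \<and>
     (\<forall>x. x \<noteq> 0 \<longrightarrow> (\<exists>u n. u dvd 1 \<and> x = u * p ^ n))"

definition is_dvr :: "'a::idom itself \<Rightarrow> bool" where
  "is_dvr _ \<longleftrightarrow> (\<exists>p::'a. uniformizer p)"

definition adic_topology :: "'a::idom \<Rightarrow> 'a topology" where
  "adic_topology p = topology_generated_by {{x + p ^ n * y | y. True} | x n. True}"

definition is_compact_dvr :: "'a::idom itself \<Rightarrow> bool" where
  "is_compact_dvr T \<longleftrightarrow> (\<exists>p::'a. uniformizer p \<and> compact_space (adic_topology p))"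

text \<open>o^m is modelled as functions nat => o vanishing from index m on.\<close>
definition fvec :: "nat \<Rightarrow> (nat \<Rightarrow> 'a::comm_ring_1) set" where
  "fvec m = {x. \<forall>i\<ge>m. x i = 0}"

definition submod :: "nat \<Rightarrow> (nat \<Rightarrow> 'a::comm_ring_1) set \<Rightarrow> bool" where
  "submod m U \<longleftrightarrow> U \<subseteq> fvec m \<and> (\<lambda>i. 0) \<in> U \<and>
     (\<forall>x\<in>U. \<forall>y\<in>U. (\<lambda>i. x i + y i) \<in> U) \<and> (\<forall>c. \<forall>x\<in>U. (\<lambda>i. c * x i) \<in> U)"

definition cosets :: "nat \<Rightarrow> (nat \<Rightarrow> 'a::comm_ring_1) set \<Rightarrow> (nat \<Rightarrow> 'a) set set" where
  "cosets m U = (\<lambda>x. {(\<lambda>i. x i + u i) | u. u \<in> U}) ` fvec m"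

definition findex_submod :: "nat \<Rightarrow> (nat \<Rightarrow> 'a::comm_ring_1) set \<Rightarrow> bool" where
  "findex_submod m U \<longleftrightarrow> submod m U \<and> finite (cosets m U)"

definition mindex :: "nat \<Rightarrow> (nat \<Rightarrow> 'a::comm_ring_1) set \<Rightarrow> nat" where
  "mindex m U = card (cosets m U)"

definition zeta_free :: "'a::comm_ring_1 itself \<Rightarrow> nat \<Rightarrow> complex \<Rightarrow> complex" where
  "zeta_free T m s =
     infsum (\<lambda>U::(nat \<Rightarrow> 'a) set. (of_nat (mindex m U) :: complex) powr (- s))
            {U. findex_submod m U}"

text \<open>A representation of a quiver with vertices {..<n}, arrow set E with tail
and head maps, vertex modules o^(d i), and arrow maps f e : o^(d (tail e)) -> o^(d (head e)).
A finite-index subrepresentation is a tuple of finite-index submodules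
(set to the empty set outside the vertex set) compatible with the arrow maps.\<close>
definition fi_subrep ::
  "nat \<Rightarrow> 'e set \<Rightarrow> ('e \<Rightarrow> nat) \<Rightarrow> ('e \<Rightarrow> nat) \<Rightarrow> (nat \<Rightarrow> nat) \<Rightarrow>
   ('e \<Rightarrow> (nat \<Rightarrow> 'a) \<Rightarrow> (nat \<Rightarrow> 'a)) \<Rightarrow> (nat \<Rightarrow> (nat \<Rightarrow> 'a::comm_ring_1) set) \<Rightarrow> bool" where
  "fi_subrep n E tail head d f \<Lambda> \<longleftrightarrow>
     (\<forall>i<n. findex_submod (d i) (\<Lambda> i)) \<and> (\<forall>i\<ge>n. \<Lambda> i = {}) \<and>
     (\<forall>e\<in>E. f e ` \<Lambda> (tail e) \<subseteq> \<Lambda> (head e))"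

definition zeta_rep ::
  "nat \<Rightarrow> 'e set \<Rightarrow> ('e \<Rightarrow> nat) \<Rightarrow> ('e \<Rightarrow> nat) \<Rightarrow> (nat \<Rightarrow> nat) \<Rightarrow>
   ('e \<Rightarrow> (nat \<Rightarrow> 'a::comm_ring_1) \<Rightarrow> (nat \<Rightarrow> 'a)) \<Rightarrow> complex \<Rightarrow> complex" where
  "zeta_rep n E tail head d f s =
     infsum (\<lambda>\<Lambda>::nat \<Rightarrow> (nat \<Rightarrow> 'a) set.
               \<Prod>i<n. (of_nat (mindex (d i) (\<Lambda> i)) :: complex) powr (- s))
            {\<Lambda>. fi_subrep n E tail head d f \<Lambda>}"

text \<open>V*_{m,a}(o): dual star quiver S*_a with vertices v_1..v_a encoded as 0..a-1,
arrows j -> 0 for j = 1..a-1 (arrow named by its tail), every vertex o^m,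
every arrow the identity.\<close>
definition zeta_dual_star :: "'a::comm_ring_1 itself \<Rightarrow> nat \<Rightarrow> nat \<Rightarrow> complex \<Rightarrow> complex" where
  "zeta_dual_star T m a s =
     zeta_rep a {1..<a} (\<lambda>j. j) (\<lambda>j. 0) (\<lambda>i. m)
              (\<lambda>j (x::nat \<Rightarrow> 'a). x) s"

end

theory Submission
  imports Defs "HOL-Library.Function_Algebras"
begin

text \<open>
  A finite-index subrepresentation of V*(m,a) is a lattice \<open>\<Lambda>\<^sub>1\<close> of finite index in o^m
  together with a - 1 finite-index lattices \<open>\<Lambda>\<^sub>j \<subseteq> \<Lambda>\<^sub>1\<close>, chosen independently.
  Every finite-index submodule L of o^m is free of rank m (a basis is built coordinate by
  coordinate, as for a Hermite normal form), and an isomorphism o^m \<cong> L multiplies indices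
  by |o^m : L|. Hence the lattices inside L contribute |o^m : L|^(-s) \<zeta>(s), where
  \<zeta> = \<zeta>_(o^m), and summing over \<open>\<Lambda>\<^sub>1\<close> gives \<Sum>_L |o^m : L|^(-a s) \<zeta>(s)^(a-1).

  The rearrangements are justified by absolute convergence for Re s > m, proved by induction
  on m: a lattice U in o^(m+1) is determined by U' = U \<inter> o^m, the valuation j of its ideal of
  last coordinates and one of the |o^m : U'| cosets of U', and |o^(m+1) : U| = |o^m : U'| q^j,
  where q = |o / \<pi> o| is finite by compactness.
\<close>

section \<open>Indices of additive subgroups\<close>

definition add_subgroup :: "'g::ab_group_add set \<Rightarrow> bool" where
  "add_subgroup V \<longleftrightarrow> 0 \<in> V \<and> (\<forall>x\<in>V. \<forall>y\<in>V. x + y \<in> V) \<and> (\<forall>x\<in>V. - x \<in> V)"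

definition cosets_in :: "'g::ab_group_add set \<Rightarrow> 'g set \<Rightarrow> 'g set set" where
  "cosets_in A V = (\<lambda>x. (+) x ` V) ` A"

lemma add_subgroup_diff: "add_subgroup V \<Longrightarrow> x \<in> V \<Longrightarrow> y \<in> V \<Longrightarrow> x - y \<in> V"
  unfolding add_subgroup_def by (metis diff_conv_add_uminus)

lemma coset_eq_iff:
  assumes "add_subgroup V"
  shows "(+) x ` V = (+) y ` V \<longleftrightarrow> x - y \<in> V"
proof
  assume eq: "(+) x ` V = (+) y ` V"
  have "x \<in> (+) x ` V" using assms unfolding add_subgroup_def by (metis add.right_neutral image_eqI)
  then obtain v where "v \<in> V" "x = y + v" using eq by auto
  then show "x - y \<in> V" by simp
next
  assume "x - y \<in> V"
  then have "(x - y) + v \<in> V" "v - (x - y) \<in> V" if "v \<in> V" for v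
    using assms that add_subgroup_diff unfolding add_subgroup_def by blast+
  then have "x + v \<in> (+) y ` V" "y + v \<in> (+) x ` V" if "v \<in> V" for v
    using that by (auto intro: image_eqI[where x = "(x - y) + v"] image_eqI[where x = "v - (x - y)"])
  then show "(+) x ` V = (+) y ` V" by blast
qed

lemma card_image_eq_if_eq_iff:
  assumes "\<And>x y. x \<in> W \<Longrightarrow> y \<in> W \<Longrightarrow> f x = f y \<longleftrightarrow> g x = g y"
  shows "card (f ` W) = card (g ` W)"
proof -
  let ?h = "g \<circ> inv_into W f"
  have h: "g (inv_into W f (f x)) = g x" if "x \<in> W" for x
    using assms[of "inv_into W f (f x)" x] that by (simp add: inv_into_into f_inv_into_f)
  have "inj_on ?h (f ` W)"
    by (auto simp: inj_on_def h assms)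
  moreover have "?h ` f ` W = g ` W"
    using h by (auto simp: image_iff)
  ultimately show ?thesis by (metis card_image)
qed

lemma coset_representative:
  assumes W: "add_subgroup W"
  obtains rep where "\<And>x. x \<in> A \<Longrightarrow> rep ((+) x ` W) \<in> A \<and> x - rep ((+) x ` W) \<in> W"
proof
  fix x assume "x \<in> A"
  then have "\<exists>z. z \<in> A \<and> (+) x ` W = (+) z ` W" by blast
  then have "(SOME z. z \<in> A \<and> (+) x ` W = (+) z ` W) \<in> A \<and>
      (+) x ` W = (+) (SOME z. z \<in> A \<and> (+) x ` W = (+) z ` W) ` W"
    by (rule someI_ex)
  then show "(SOME z. z \<in> A \<and> (+) x ` W = (+) z ` W) \<in> A \<and>
      x - (SOME z. z \<in> A \<and> (+) x ` W = (+) z ` W) \<in> W"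
    using coset_eq_iff[OF W] by blast
qed

lemma card_cosets_tower:
  assumes A: "add_subgroup A" and W: "add_subgroup W" and V: "add_subgroup V"
    and "V \<subseteq> W" "W \<subseteq> A"
  shows "card (cosets_in A V) = card (cosets_in A W) * card (cosets_in W V)"
proof -
  obtain rep where rep: "\<And>x. x \<in> A \<Longrightarrow> rep ((+) x ` W) \<in> A \<and> x - rep ((+) x ` W) \<in> W"
    using coset_representative[OF W] by blast
  \<comment> \<open>a coset of V is determined by the coset of W containing it and its position inside it\<close>
  define F where "F x = ((+) x ` W, (+) (x - rep ((+) x ` W)) ` V)" for x
  have "(+) x ` V = (+) y ` V \<longleftrightarrow> F x = F y" if "x \<in> A" "y \<in> A" for x y
  proof
    assume "(+) x ` V = (+) y ` V"
    then have "x - y \<in> V" using coset_eq_iff[OF V] by blast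
    then have "(+) x ` W = (+) y ` W" using coset_eq_iff[OF W] \<open>V \<subseteq> W\<close> by blast
    then show "F x = F y" unfolding F_def using coset_eq_iff[OF V] \<open>x - y \<in> V\<close> by simp
  next
    assume "F x = F y"
    then have "(+) x ` W = (+) y ` W" "(x - rep ((+) x ` W)) - (y - rep ((+) y ` W)) \<in> V"
      unfolding F_def using coset_eq_iff[OF V] by auto
    then show "(+) x ` V = (+) y ` V" using coset_eq_iff[OF V] by simp
  qed
  then have "card (cosets_in A V) = card (F ` A)"
    unfolding cosets_in_def by (rule card_image_eq_if_eq_iff)
  also have "F ` A = cosets_in A W \<times> cosets_in W V"
  proof
    show "F ` A \<subseteq> cosets_in A W \<times> cosets_in W V"
      using rep unfolding F_def cosets_in_def by auto
  next
    show "cosets_in A W \<times> cosets_in W V \<subseteq> F ` A"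
    proof clarify
      fix C D assume "C \<in> cosets_in A W" "D \<in> cosets_in W V"
      then obtain x d where x: "x \<in> A" "C = (+) x ` W" and d: "d \<in> W" "D = (+) d ` V"
        unfolding cosets_in_def by auto
      define z where "z = rep C + d"
      have "z \<in> A" using rep[OF x(1)] d(1) A \<open>W \<subseteq> A\<close> unfolding z_def x(2) add_subgroup_def by blast
      moreover have "(+) z ` W = C"
        using rep[OF x(1)] d(1) coset_eq_iff[OF W] add_subgroup_diff[OF W]
        unfolding z_def x(2) by (metis add_diff_cancel_left' diff_add_eq diff_diff_eq2)
      then have "F z = (C, D)" unfolding F_def using d(2) by (simp add: z_def)
      ultimately show "(C, D) \<in> F ` A" by (metis image_eqI)
    qed
  qed
  finally show ?thesis by (simp add: card_cartesian_product)
qed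

lemma card_cosets_sum_inter:
  assumes U: "add_subgroup U" and V: "add_subgroup V"
  shows "card (cosets_in {u + v | u v. u \<in> U \<and> v \<in> V} U) = card (cosets_in V (U \<inter> V))"
proof -
  have UV: "add_subgroup (U \<inter> V)" using U V unfolding add_subgroup_def by blast
  have "cosets_in {u + v | u v. u \<in> U \<and> v \<in> V} U = (\<lambda>v. (+) v ` U) ` V"
  proof -
    have "(+) (u + v) ` U = (+) v ` U" if "u \<in> U" for u v
      using that coset_eq_iff[OF U] by simp
    moreover have "v \<in> {u + v | u v. u \<in> U \<and> v \<in> V}" if "v \<in> V" for v
      using that U unfolding add_subgroup_def by force
    ultimately show ?thesis unfolding cosets_in_def by (auto simp: image_iff) metis
  qed
  also have "card \<dots> = card (cosets_in V (U \<inter> V))"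
    unfolding cosets_in_def
    by (rule card_image_eq_if_eq_iff) (simp add: coset_eq_iff U UV add_subgroup_diff[OF V])
  finally show ?thesis .
qed

section \<open>Compact discrete valuation rings\<close>

lemma uniformizer_power_inj:
  assumes "uniformizer (p::'a::idom)"
  shows "inj (\<lambda>n. p ^ n)"
proof -
  have "n = k" if "n \<le> k" "p ^ n = p ^ k" for n k
  proof -
    have "p ^ n * p ^ (k - n) = p ^ n * 1"
      using that by (metis le_add_diff_inverse mult_1_right power_add)
    then have "p ^ (k - n) = 1"
      using assms unfolding uniformizer_def by (metis mult_left_cancel power_not_zero)
    then show "n = k"
      using assms \<open>n \<le> k\<close> unfolding uniformizer_def by (metis dvd_power dvd_refl le_neq_implies_less zero_less_diff)
  qed
  then show ?thesis by (metis injI nle_le)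
qed

lemma infinite_UNIV_if_uniformizer: "uniformizer (p::'a::idom) \<Longrightarrow> infinite (UNIV :: 'a set)"
  using uniformizer_power_inj finite_imageD infinite_UNIV_nat finite_subset subset_UNIV by metis

lemma add_subgroup_multiples: "add_subgroup {x. (d::'a::comm_ring_1) dvd x}"
  by (simp add: add_subgroup_def)

definition residue_card :: "'a::idom \<Rightarrow> nat \<Rightarrow> nat" where
  "residue_card p j = card (cosets_in UNIV {x. p ^ j dvd x})"

lemma residue_card_Suc:
  assumes "uniformizer (p::'a::idom)"
  shows "residue_card p (Suc j) = residue_card p j * residue_card p 1"
proof -
  have "residue_card p (Suc j)
      = residue_card p j * card (cosets_in {x. p ^ j dvd x} {x. p ^ Suc j dvd x})"
    unfolding residue_card_def
    by (rule card_cosets_tower) (auto simp: add_subgroup_multiples add_subgroup_def intro: dvd_mult_right)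
  also have "{x. p ^ j dvd x} = range ((*) (p ^ j))"
    by (auto simp: dvd_def)
  also have "cosets_in (range ((*) (p ^ j))) {x. p ^ Suc j dvd x}
      = (\<lambda>y. (+) (p ^ j * y) ` {x. p ^ Suc j dvd x}) ` UNIV"
    unfolding cosets_in_def image_image ..
  also have "card \<dots> = residue_card p 1"
    unfolding residue_card_def cosets_in_def
  proof (rule card_image_eq_if_eq_iff)
    fix y z :: 'a
    have "p ^ Suc j dvd p ^ j * (y - z) \<longleftrightarrow> p dvd y - z"
      using assms unfolding uniformizer_def by (simp add: mult.commute)
    then show "(+) (p ^ j * y) ` {x. p ^ Suc j dvd x} = (+) (p ^ j * z) ` {x. p ^ Suc j dvd x}
        \<longleftrightarrow> (+) y ` {x. p ^ 1 dvd x} = (+) z ` {x. p ^ 1 dvd x}"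
      by (simp add: coset_eq_iff add_subgroup_multiples right_diff_distrib)
  qed
  finally show ?thesis .
qed

lemma residue_card_power:
  assumes "uniformizer (p::'a::idom)"
  shows "residue_card p j = residue_card p 1 ^ j"
proof (induction j)
  case 0
  have all: "{x::'a. p ^ 0 dvd x} = UNIV" by simp
  show ?case unfolding residue_card_def cosets_in_def all by simp
next
  case (Suc j)
  then show ?case using residue_card_Suc[OF assms, of j] by simp
qed

lemma residue_card_ge_2:
  assumes "uniformizer (p::'a::idom)" and "finite (cosets_in UNIV {x. p dvd x})"
  shows "residue_card p 1 \<ge> 2"
proof -
  let ?C0 = "(+) 0 ` {x. p dvd x}" and ?C1 = "(+) 1 ` {x. p dvd x}"
  have "\<not> p dvd 1" using assms(1) unfolding uniformizer_def by blast
  then have "?C0 \<noteq> ?C1"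
    using coset_eq_iff[OF add_subgroup_multiples, of 0 p 1] by (metis mem_Collect_eq diff_0 dvd_minus_iff)
  then have "card {?C0, ?C1} = 2" by (rule card_2_iff[THEN iffD2, OF exI, OF exI, OF conjI[OF refl]])
  moreover have "{?C0, ?C1} \<subseteq> cosets_in UNIV {x. p dvd x}"
    unfolding cosets_in_def by (intro insert_subsetI empty_subsetI rangeI)
  ultimately have "2 \<le> card (cosets_in UNIV {x. p dvd x})"
    using card_mono[OF assms(2)] by metis
  then show ?thesis by (simp add: residue_card_def)
qed

lemma finite_residue_field:
  assumes "compact_space (adic_topology (p::'a::idom))"
  shows "finite (cosets_in UNIV {x. p dvd x})"
proof -
  let ?\<C> = "cosets_in UNIV {x. p dvd x}"
  have coset: "(+) x ` {x. p dvd x} = {x + p ^ 1 * y | y. True}" for x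
    by (auto simp: dvd_def)
  have open_coset: "openin (adic_topology p) C" if "C \<in> ?\<C>" for C
  proof -
    have "C \<in> {{x + p ^ n * y | y. True} | x n. True}"
      using that unfolding cosets_in_def coset by blast
    then show ?thesis unfolding adic_topology_def by (rule topology_generated_by_Basis)
  qed
  have cover: "UNIV \<subseteq> \<Union>?\<C>"
    unfolding cosets_in_def by (auto intro: image_eqI[where x = 0])
  then have top: "topspace (adic_topology p) = UNIV"
    using open_coset openin_subset by blast
  have "(\<forall>C\<in>?\<C>. openin (adic_topology p) C) \<and> topspace (adic_topology p) \<subseteq> \<Union>?\<C> \<longrightarrow>
      (\<exists>\<F>. finite \<F> \<and> \<F> \<subseteq> ?\<C> \<and> topspace (adic_topology p) \<subseteq> \<Union>\<F>)"
    using assms unfolding compact_space_alt by (rule spec)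
  then obtain \<F> where \<F>: "finite \<F>" "\<F> \<subseteq> ?\<C>" "UNIV \<subseteq> \<Union>\<F>"
    using open_coset cover unfolding top by auto
  \<comment> \<open>distinct cosets are disjoint, so a covering by cosets contains all of them\<close>
  have "?\<C> \<subseteq> \<F>"
  proof
    fix C assume "C \<in> ?\<C>"
    then obtain x where C: "C = (+) x ` {x. p dvd x}" unfolding cosets_in_def by blast
    obtain D where "D \<in> \<F>" "x \<in> D" using \<F>(3) by blast
    moreover have "D \<in> ?\<C>" using \<open>D \<in> \<F>\<close> \<F>(2) by blast
    then obtain y where D: "D = (+) y ` {x. p dvd x}" unfolding cosets_in_def by blast
    ultimately obtain v where "p dvd v" "x = y + v" by blast
    then have "x - y \<in> {x. p dvd x}" by simp
    then have "C = D" unfolding C D by (simp only: coset_eq_iff[OF add_subgroup_multiples])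
    then show "C \<in> \<F>" using \<open>D \<in> \<F>\<close> by simp
  qed
  then show ?thesis using \<F>(1) by (rule finite_subset)
qed

section \<open>Submodules of finite index in o^m\<close>

lemma add_subgroup_fvec: "add_subgroup (fvec m :: (nat \<Rightarrow> 'a::comm_ring_1) set)"
  unfolding add_subgroup_def fvec_def by auto

lemma submod_iff:
  "submod m U \<longleftrightarrow> U \<subseteq> fvec m \<and> 0 \<in> U \<and> (\<forall>x\<in>U. \<forall>y\<in>U. x + y \<in> U) \<and>
     (\<forall>c. \<forall>x\<in>U. (\<lambda>i. c * x i) \<in> U)"
  by (simp add: submod_def plus_fun_def zero_fun_def)

lemma add_subgroup_if_submod:
  assumes "submod m (U :: (nat \<Rightarrow> 'a::comm_ring_1) set)"
  shows "add_subgroup U"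
proof -
  have "- x = (\<lambda>i. (-1) * x i)" for x :: "nat \<Rightarrow> 'a" by auto
  then show ?thesis using assms unfolding add_subgroup_def submod_iff by metis
qed

lemma cosets_eq_cosets_in: "cosets m U = cosets_in (fvec m) U"
proof -
  have "{(\<lambda>i. x i + u i) | u. u \<in> U} = (+) x ` U" for x :: "nat \<Rightarrow> 'a"
    by (auto simp: plus_fun_def)
  then show ?thesis unfolding cosets_def cosets_in_def by simp
qed

lemma mindex_eq_card: "mindex m U = card (cosets_in (fvec m) U)"
  unfolding mindex_def cosets_eq_cosets_in ..

lemma findex_submod_iff_mindex: "findex_submod m U \<longleftrightarrow> submod m U \<and> mindex m U > 0"
proof -
  have "(\<lambda>i. 0) \<in> fvec m" unfolding fvec_def by simp
  then have "cosets m U \<noteq> {}" unfolding cosets_def by blast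
  then show ?thesis unfolding findex_submod_def mindex_def by (auto simp: card_gt_0_iff)
qed

lemma mindex_pos: "findex_submod m U \<Longrightarrow> mindex m U > 0"
  by (simp add: findex_submod_iff_mindex)

lemma fvec_Suc_iff: "x \<in> fvec m \<longleftrightarrow> x \<in> fvec (Suc m) \<and> x m = 0"
proof -
  have "(\<forall>i\<ge>m. x i = 0) \<longleftrightarrow> (\<forall>i\<ge>Suc m. x i = 0) \<and> x m = 0"
  proof
    assume h: "(\<forall>i\<ge>Suc m. x i = 0) \<and> x m = 0"
    show "\<forall>i\<ge>m. x i = 0"
    proof (intro allI impI)
      fix i assume "m \<le> i" then show "x i = 0" using h by (cases "i = m") auto
    qed
  qed simp
  then show ?thesis unfolding fvec_def by simp
qed

lemma fvec_subset_Suc: "fvec m \<subseteq> fvec (Suc m)"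
  using fvec_Suc_iff by blast

lemma card_cosets_last_coordinate:
  fixes I :: "'a::comm_ring_1 set"
  assumes I: "add_subgroup I"
  shows "card (cosets_in (fvec (Suc m)) {x \<in> fvec (Suc m). x m \<in> I}) = card (cosets_in UNIV I)"
proof -
  let ?W = "{x \<in> fvec (Suc m). x m \<in> I}"
  have W: "add_subgroup ?W"
    using I add_subgroup_fvec unfolding add_subgroup_def by auto
  have "card (cosets_in (fvec (Suc m)) ?W) = card ((\<lambda>x. (+) (x m) ` I) ` fvec (Suc m))"
    unfolding cosets_in_def
  proof (rule card_image_eq_if_eq_iff)
    fix x y :: "nat \<Rightarrow> 'a" assume "x \<in> fvec (Suc m)" "y \<in> fvec (Suc m)"
    then have "x - y \<in> ?W \<longleftrightarrow> x m - y m \<in> I"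
      using add_subgroup_diff[OF add_subgroup_fvec] by auto
    then show "(+) x ` ?W = (+) y ` ?W \<longleftrightarrow> (+) (x m) ` I = (+) (y m) ` I"
      by (simp add: coset_eq_iff I W)
  qed
  also have "(\<lambda>x. (+) (x m) ` I) ` fvec (Suc m) = (\<lambda>c. (+) c ` I) ` (\<lambda>x. x m) ` fvec (Suc m)"
    by (rule image_image[symmetric])
  also have "(\<lambda>x. x m) ` fvec (Suc m) = (UNIV :: 'a set)"
  proof -
    have "(\<lambda>i. if i = m then c else 0) \<in> fvec (Suc m)" for c :: 'a
      unfolding fvec_def by auto
    then have "c \<in> (\<lambda>x. x m) ` fvec (Suc m)" for c :: 'a
      by (rule rev_image_eqI) simp
    then show ?thesis by blast
  qed
  finally show ?thesis unfolding cosets_in_def .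
qed

lemma findex_submod_Suc_last_nonzero:
  fixes U :: "(nat \<Rightarrow> 'a::idom) set"
  assumes "uniformizer (p::'a)" and U: "findex_submod (Suc m) U"
  shows "\<exists>x\<in>U. x m \<noteq> 0"
proof (rule ccontr)
  assume "\<not> ?thesis"
  then have "U \<subseteq> fvec m"
    using U fvec_Suc_iff unfolding findex_submod_def submod_def by blast
  have fvec_m: "fvec m = {x \<in> fvec (Suc m). x m \<in> {0::'a}}"
    using fvec_Suc_iff by auto
  have "mindex (Suc m) U
      = card (cosets_in (fvec (Suc m)) (fvec m :: (nat \<Rightarrow> 'a) set)) * card (cosets_in (fvec m) U)"
    unfolding mindex_eq_card
    by (intro card_cosets_tower add_subgroup_fvec add_subgroup_if_submod[of "Suc m"] fvec_subset_Suc
        \<open>U \<subseteq> fvec m\<close>) (use U in \<open>simp add: findex_submod_def\<close>)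
  also have "card (cosets_in (fvec (Suc m)) (fvec m :: (nat \<Rightarrow> 'a) set)) = card (cosets_in UNIV {0::'a})"
    unfolding fvec_m by (rule card_cosets_last_coordinate) (simp add: add_subgroup_def)
  also have "cosets_in UNIV {0::'a} = (\<lambda>x. {x}) ` UNIV"
    unfolding cosets_in_def by simp
  also have "card \<dots> = 0"
    using infinite_UNIV_if_uniformizer[OF assms(1)] by (simp add: card_image)
  finally show False using mindex_pos[OF U] by simp
qed

lemma last_coordinate_generator:
  fixes U :: "(nat \<Rightarrow> 'a::idom) set"
  assumes p: "uniformizer (p::'a)" and U: "findex_submod (Suc m) U"
  obtains j u where "u \<in> U" "u m = p ^ j" "\<forall>x\<in>U. p ^ j dvd x m"
proof -
  define exps where "exps = {n. \<exists>x\<in>U. \<exists>v. v dvd 1 \<and> x m = v * p ^ n}"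
  have exps: "\<exists>n\<in>exps. \<exists>v. v dvd 1 \<and> x m = v * p ^ n" if "x \<in> U" "x m \<noteq> 0" for x
    using that p unfolding uniformizer_def exps_def by blast
  obtain x where "x \<in> U" "x m \<noteq> 0" using findex_submod_Suc_last_nonzero[OF p U] by blast
  then have "exps \<noteq> {}" using exps by blast
  define j where "j = (LEAST n. n \<in> exps)"
  have "j \<in> exps" unfolding j_def using \<open>exps \<noteq> {}\<close> by (meson LeastI ex_in_conv)
  then obtain x v where x: "x \<in> U" "x m = v * p ^ j" and "v dvd 1"
    unfolding exps_def by blast
  from \<open>v dvd 1\<close> obtain w where "1 = v * w" by (rule dvdE)
  have "(\<lambda>i. w * x i) \<in> U" using U x(1) unfolding findex_submod_def submod_def by blast
  moreover have "(\<lambda>i. w * x i) m = p ^ j" using x(2) \<open>1 = v * w\<close> by (simp add: algebra_simps)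
  moreover have "p ^ j dvd y m" if y: "y \<in> U" for y
  proof (cases "y m = 0")
    case False
    then obtain n v' where "n \<in> exps" "y m = v' * p ^ n" using exps y by blast
    moreover have "j \<le> n" unfolding j_def using \<open>n \<in> exps\<close> by (rule Least_le)
    ultimately show ?thesis by (simp add: le_imp_power_dvd)
  qed simp
  ultimately show ?thesis using that by blast
qed

lemma submod_plus_fvec_eq:
  fixes U :: "(nat \<Rightarrow> 'a::comm_ring_1) set"
  assumes U: "submod (Suc m) U" and u: "u \<in> U" "u m = d" and dvd: "\<forall>x\<in>U. d dvd x m"
  shows "{x + v | x v. x \<in> U \<and> v \<in> fvec m} = {x \<in> fvec (Suc m). x m \<in> {y. d dvd y}}"
proof (intro equalityI subsetI)
  fix z assume "z \<in> {x + v | x v. x \<in> U \<and> v \<in> fvec m}"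
  then obtain x v where z: "z = x + v" and "x \<in> U" "v \<in> fvec m" by blast
  then have "x \<in> fvec (Suc m)" "v \<in> fvec (Suc m)" "v m = 0"
    using U fvec_Suc_iff unfolding submod_def by auto
  then have "z \<in> fvec (Suc m)" using add_subgroup_fvec unfolding add_subgroup_def z by blast
  moreover have "d dvd z m" using dvd \<open>x \<in> U\<close> \<open>v m = 0\<close> z by simp
  ultimately show "z \<in> {x \<in> fvec (Suc m). x m \<in> {y. d dvd y}}" by simp
next
  fix z assume "z \<in> {x \<in> fvec (Suc m). x m \<in> {y. d dvd y}}"
  then obtain t where z: "z \<in> fvec (Suc m)" "z m = d * t" by (auto elim: dvdE)
  have "(\<lambda>i. t * u i) \<in> U" using U u(1) unfolding submod_def by blast
  moreover have "z - (\<lambda>i. t * u i) \<in> fvec m"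
  proof (rule fvec_Suc_iff[THEN iffD2, OF conjI])
    have "(\<lambda>i. t * u i) \<in> fvec (Suc m)" using \<open>(\<lambda>i. t * u i) \<in> U\<close> U unfolding submod_def by blast
    then show "z - (\<lambda>i. t * u i) \<in> fvec (Suc m)" using z(1) add_subgroup_diff[OF add_subgroup_fvec] by blast
    show "(z - (\<lambda>i. t * u i)) m = 0" using z(2) u(2) by (simp add: mult.commute)
  qed
  ultimately show "z \<in> {x + v | x v. x \<in> U \<and> v \<in> fvec m}"
    by (intro CollectI exI[where x = "\<lambda>i. t * u i"] exI[where x = "z - (\<lambda>i. t * u i)"]) simp
qed

lemma submod_Int_fvec: "submod n U \<Longrightarrow> submod m (U \<inter> fvec m)"
  unfolding submod_def fvec_def by auto

lemma mindex_Suc: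
  fixes U :: "(nat \<Rightarrow> 'a::idom) set"
  assumes U: "submod (Suc m) U" and u: "u \<in> U" "u m = p ^ j" and dvd: "\<forall>x\<in>U. p ^ j dvd x m"
  shows "mindex (Suc m) U = mindex m (U \<inter> fvec m) * residue_card p j"
proof -
  let ?W = "{x \<in> fvec (Suc m). x m \<in> {y. p ^ j dvd y}}"
  have W: "?W = {x + v | x v. x \<in> U \<and> v \<in> fvec m}"
    using submod_plus_fvec_eq[OF U u dvd] by simp
  have "mindex (Suc m) U = card (cosets_in (fvec (Suc m)) ?W) * card (cosets_in ?W U)"
    unfolding mindex_eq_card
  proof (rule card_cosets_tower)
    show "add_subgroup ?W"
      using add_subgroup_fvec add_subgroup_multiples unfolding add_subgroup_def by auto
    show "U \<subseteq> ?W" using U dvd unfolding submod_def by blast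
  qed (use U in \<open>auto intro: add_subgroup_fvec add_subgroup_if_submod\<close>)
  also have "card (cosets_in (fvec (Suc m)) ?W) = residue_card p j"
    unfolding residue_card_def by (rule card_cosets_last_coordinate[OF add_subgroup_multiples])
  also have "card (cosets_in ?W U) = mindex m (U \<inter> fvec m)"
    unfolding W mindex_eq_card
    by (rule card_cosets_sum_inter[OF add_subgroup_if_submod[OF U] add_subgroup_fvec])
  finally show ?thesis by simp
qed

lemma findex_submod_Int_fvec:
  fixes U :: "(nat \<Rightarrow> 'a::idom) set"
  assumes U: "findex_submod (Suc m) U" and u: "u \<in> U" "u m = p ^ j" and dvd: "\<forall>x\<in>U. p ^ j dvd x m"
  shows "findex_submod m (U \<inter> fvec m)"
proof -
  have "submod (Suc m) U" using U by (simp add: findex_submod_def)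
  then show ?thesis
    using mindex_pos[OF U] mindex_Suc[OF _ u dvd] submod_Int_fvec
    by (simp add: findex_submod_iff_mindex)
qed

definition fvec_linear :: "nat \<Rightarrow> ((nat \<Rightarrow> 'a::comm_ring_1) \<Rightarrow> (nat \<Rightarrow> 'a)) \<Rightarrow> bool" where
  "fvec_linear m \<phi> \<longleftrightarrow> (\<forall>x\<in>fvec m. \<forall>y\<in>fvec m. \<phi> (x + y) = \<phi> x + \<phi> y) \<and>
     (\<forall>c. \<forall>x\<in>fvec m. \<phi> (\<lambda>i. c * x i) = (\<lambda>i. c * \<phi> x i))"

lemma fun_upd_last_in_fvec: "x \<in> fvec (Suc m) \<Longrightarrow> x(m := 0) \<in> fvec m"
  by (simp add: fvec_Suc_iff[of "x(m := 0)"] fvec_def)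

context
  fixes U :: "(nat \<Rightarrow> 'a::idom) set" and \<psi> :: "(nat \<Rightarrow> 'a) \<Rightarrow> nat \<Rightarrow> 'a" and u :: "nat \<Rightarrow> 'a" and m :: nat
  assumes U: "submod (Suc m) U"
    and \<psi>_linear: "fvec_linear m \<psi>" and \<psi>_inj: "inj_on \<psi> (fvec m)" and \<psi>_image: "\<psi> ` fvec m = U \<inter> fvec m"
    and u: "u \<in> U" "u m \<noteq> 0" and u_dvd: "\<forall>x\<in>U. u m dvd x m"
begin

lemma extend_basis_linear: "fvec_linear (Suc m) (\<lambda>x. \<psi> (x(m := 0)) + (\<lambda>i. x m * u i))"
  unfolding fvec_linear_def
proof (intro conjI ballI allI)
  fix x y :: "nat \<Rightarrow> 'a" assume "x \<in> fvec (Suc m)" "y \<in> fvec (Suc m)"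
  moreover have "(x + y)(m := 0) = x(m := 0) + y(m := 0)" by (auto simp: fun_eq_iff)
  ultimately have "\<psi> ((x + y)(m := 0)) = \<psi> (x(m := 0)) + \<psi> (y(m := 0))"
    using \<psi>_linear fun_upd_last_in_fvec unfolding fvec_linear_def by metis
  then show "\<psi> ((x + y)(m := 0)) + (\<lambda>i. (x + y) m * u i)
      = \<psi> (x(m := 0)) + (\<lambda>i. x m * u i) + (\<psi> (y(m := 0)) + (\<lambda>i. y m * u i))"
    by (auto simp: fun_eq_iff algebra_simps)
next
  fix c :: 'a and x :: "nat \<Rightarrow> 'a" assume "x \<in> fvec (Suc m)"
  moreover have "(\<lambda>i. c * x i)(m := 0) = (\<lambda>i. c * (x(m := 0)) i)" by auto
  ultimately have "\<psi> ((\<lambda>i. c * x i)(m := 0)) = (\<lambda>i. c * \<psi> (x(m := 0)) i)"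
    using \<psi>_linear fun_upd_last_in_fvec unfolding fvec_linear_def by metis
  then show "\<psi> ((\<lambda>i. c * x i)(m := 0)) + (\<lambda>i. c * x m * u i)
      = (\<lambda>i. c * (\<psi> (x(m := 0)) + (\<lambda>i. x m * u i)) i)"
    by (auto simp: fun_eq_iff algebra_simps)
qed

lemma extend_basis_inj: "inj_on (\<lambda>x. \<psi> (x(m := 0)) + (\<lambda>i. x m * u i)) (fvec (Suc m))"
proof (rule inj_onI)
  fix x y assume x: "x \<in> fvec (Suc m)" and y: "y \<in> fvec (Suc m)"
    and eq: "\<psi> (x(m := 0)) + (\<lambda>i. x m * u i) = \<psi> (y(m := 0)) + (\<lambda>i. y m * u i)"
  have last: "\<psi> z m = 0" if "z \<in> fvec m" for z
    using that \<psi>_image fvec_Suc_iff by blast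
  have "x m * u m = y m * u m"
    using fun_cong[OF eq, of m] last fun_upd_last_in_fvec[OF x] fun_upd_last_in_fvec[OF y] by simp
  then have "x m = y m" using u(2) by simp
  then have "\<psi> (x(m := 0)) = \<psi> (y(m := 0))" using eq by (simp add: fun_eq_iff)
  then have "x(m := 0) = y(m := 0)"
    using \<psi>_inj fun_upd_last_in_fvec[OF x] fun_upd_last_in_fvec[OF y] by (simp add: inj_on_def)
  then show "x = y" using \<open>x m = y m\<close> by (metis fun_upd_triv fun_upd_upd)
qed

lemma extend_basis_image: "(\<lambda>x. \<psi> (x(m := 0)) + (\<lambda>i. x m * u i)) ` fvec (Suc m) = U"
proof (intro equalityI subsetI)
  fix w assume "w \<in> (\<lambda>x. \<psi> (x(m := 0)) + (\<lambda>i. x m * u i)) ` fvec (Suc m)"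
  then obtain x where x: "x \<in> fvec (Suc m)" "w = \<psi> (x(m := 0)) + (\<lambda>i. x m * u i)" by blast
  have "\<psi> (x(m := 0)) \<in> U" using \<psi>_image fun_upd_last_in_fvec[OF x(1)] by blast
  moreover have "(\<lambda>i. x m * u i) \<in> U" using U u(1) unfolding submod_def by blast
  ultimately show "w \<in> U" using U unfolding x(2) submod_iff by blast
next
  fix w assume w: "w \<in> U"
  obtain t where t: "w m = u m * t" using u_dvd w by (auto elim: dvdE)
  have "(\<lambda>i. t * u i) \<in> U" using U u(1) unfolding submod_def by blast
  then have "w - (\<lambda>i. t * u i) \<in> U"
    using w add_subgroup_diff[OF add_subgroup_if_submod[OF U]] by blast
  moreover have "w - (\<lambda>i. t * u i) \<in> fvec m"
  proof (rule fvec_Suc_iff[THEN iffD2, OF conjI])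
    show "w - (\<lambda>i. t * u i) \<in> fvec (Suc m)" using calculation U unfolding submod_def by blast
    show "(w - (\<lambda>i. t * u i)) m = 0" using t by (simp add: mult.commute)
  qed
  ultimately have "w - (\<lambda>i. t * u i) \<in> U \<inter> fvec m" by blast
  then obtain y where y: "y \<in> fvec m" "\<psi> y = w - (\<lambda>i. t * u i)" using \<psi>_image by (metis imageE)
  have "y(m := t) \<in> fvec (Suc m)" and ym: "y(m := 0) = y"
    using y(1) unfolding fvec_def by auto
  moreover have "w = \<psi> ((y(m := t))(m := 0)) + (\<lambda>i. (y(m := t)) m * u i)"
    by (simp add: ym y(2))
  ultimately show "w \<in> (\<lambda>x. \<psi> (x(m := 0)) + (\<lambda>i. x m * u i)) ` fvec (Suc m)"
    by (blast intro: rev_image_eqI)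
qed

end

lemma findex_submod_free:
  fixes U :: "(nat \<Rightarrow> 'a::idom) set"
  assumes p: "uniformizer (p::'a)" and "findex_submod m U"
  shows "\<exists>\<phi>. fvec_linear m \<phi> \<and> inj_on \<phi> (fvec m) \<and> \<phi> ` fvec m = U"
  using assms(2)
proof (induction m arbitrary: U)
  case 0
  have "fvec 0 = {0 :: nat \<Rightarrow> 'a}" unfolding fvec_def by auto
  moreover have "U \<subseteq> fvec 0" "0 \<in> U" using "0.prems" unfolding findex_submod_def submod_iff by auto
  ultimately have "id ` fvec 0 = U" by auto
  then show ?case unfolding fvec_linear_def by (metis id_apply inj_on_id)
next
  case (Suc m)
  have U: "submod (Suc m) U" using Suc.prems unfolding findex_submod_def by simp
  obtain j u where u: "u \<in> U" "u m = p ^ j" and dvd: "\<forall>x\<in>U. p ^ j dvd x m"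
    using last_coordinate_generator[OF p Suc.prems] .
  obtain \<psi> where \<psi>: "fvec_linear m \<psi>" "inj_on \<psi> (fvec m)" "\<psi> ` fvec m = U \<inter> fvec m"
    using Suc.IH[OF findex_submod_Int_fvec[OF Suc.prems u dvd]] by blast
  have "u m \<noteq> 0" using p u(2) unfolding uniformizer_def by simp
  note extend = U \<psi> u(1) this dvd[folded u(2)]
  show ?case
    using extend_basis_linear[OF extend] extend_basis_inj[OF extend] extend_basis_image[OF extend] by blast
qed

section \<open>Sublattices of a lattice\<close>

definition findex_submods :: "nat \<Rightarrow> (nat \<Rightarrow> 'a::comm_ring_1) set \<Rightarrow> (nat \<Rightarrow> 'a) set set" where
  "findex_submods m L = {V. findex_submod m V \<and> V \<subseteq> L}"

locale free_parametrization =
  fixes m :: nat and L :: "(nat \<Rightarrow> 'a::comm_ring_1) set" and \<phi> :: "(nat \<Rightarrow> 'a) \<Rightarrow> nat \<Rightarrow> 'a"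
  assumes L: "findex_submod m L" and linear: "fvec_linear m \<phi>" and inj: "inj_on \<phi> (fvec m)"
    and image: "\<phi> ` fvec m = L"
begin

lemma add: "x \<in> fvec m \<Longrightarrow> y \<in> fvec m \<Longrightarrow> \<phi> (x + y) = \<phi> x + \<phi> y"
  and scale: "x \<in> fvec m \<Longrightarrow> \<phi> (\<lambda>i. c * x i) = (\<lambda>i. c * \<phi> x i)"
  using linear unfolding fvec_linear_def by blast+

lemma diff:
  assumes "x \<in> fvec m" "y \<in> fvec m"
  shows "\<phi> (x - y) = \<phi> x - \<phi> y"
proof -
  have "x - y \<in> fvec m" using assms add_subgroup_diff[OF add_subgroup_fvec] by blast
  then have "\<phi> x = \<phi> (x - y) + \<phi> y" using add[of "x - y" y] assms(2) by simp
  then show ?thesis by (simp add: eq_diff_eq)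
qed

lemma zero: "\<phi> 0 = 0"
  using diff[of 0 0] by (simp add: fvec_def)

lemma submod_image:
  fixes W :: "(nat \<Rightarrow> 'a) set"
  assumes W: "submod m W"
  shows "submod m (\<phi> ` W)"
  unfolding submod_iff
proof (intro conjI ballI allI)
  have Wsub: "W \<subseteq> fvec m" using W unfolding submod_def by blast
  then show "\<phi> ` W \<subseteq> fvec m" using image L unfolding findex_submod_def submod_def by blast
  have "0 \<in> W" using W unfolding submod_iff by blast
  then show "0 \<in> \<phi> ` W" using zero by (metis image_eqI)
  show "x + y \<in> \<phi> ` W" if x: "x \<in> \<phi> ` W" and y: "y \<in> \<phi> ` W" for x y
  proof -
    obtain a b where ab: "a \<in> W" "b \<in> W" "x = \<phi> a" "y = \<phi> b" using x y by blast
    moreover have "a \<in> fvec m" "b \<in> fvec m" using ab Wsub by auto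
    ultimately have "x + y = \<phi> (a + b)" using add by simp
    moreover have "a + b \<in> W" using W ab unfolding submod_iff by blast
    ultimately show ?thesis by blast
  qed
  show "(\<lambda>i. c * x i) \<in> \<phi> ` W" if x: "x \<in> \<phi> ` W" for c x
  proof -
    obtain a where a: "a \<in> W" "x = \<phi> a" using x by blast
    moreover have "a \<in> fvec m" using a Wsub by auto
    ultimately have "(\<lambda>i. c * x i) = \<phi> (\<lambda>i. c * a i)" using scale by simp
    moreover have "(\<lambda>i. c * a i) \<in> W" using W a unfolding submod_iff by blast
    ultimately show ?thesis by blast
  qed
qed

lemma mindex_image:
  fixes W :: "(nat \<Rightarrow> 'a) set"
  assumes W: "submod m W"
  shows "mindex m (\<phi> ` W) = mindex m L * mindex m W"
proof -
  have Wsub: "W \<subseteq> fvec m" using W unfolding submod_def by blast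
  have sW: "add_subgroup W" and s\<phi>W: "add_subgroup (\<phi> ` W)"
    using add_subgroup_if_submod W submod_image by blast+
  have "mindex m (\<phi> ` W) = mindex m L * card (cosets_in L (\<phi> ` W))"
    unfolding mindex_eq_card
    using L Wsub image add_subgroup_if_submod add_subgroup_fvec s\<phi>W
    by (intro card_cosets_tower) (auto simp: findex_submod_def submod_def)
  also have "cosets_in L (\<phi> ` W) = (\<lambda>x. (+) (\<phi> x) ` \<phi> ` W) ` fvec m"
    unfolding cosets_in_def image[symmetric] image_image ..
  also have "card \<dots> = mindex m W"
    unfolding mindex_eq_card cosets_in_def
  proof (rule card_image_eq_if_eq_iff)
    fix x y :: "nat \<Rightarrow> 'a" assume xy: "x \<in> fvec m" "y \<in> fvec m"
    then have "x - y \<in> fvec m" using add_subgroup_diff[OF add_subgroup_fvec] by blast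
    then have "\<phi> x - \<phi> y \<in> \<phi> ` W \<longleftrightarrow> x - y \<in> W"
      using diff[OF xy] inj_on_image_mem_iff[OF inj _ Wsub] by metis
    then show "(+) (\<phi> x) ` \<phi> ` W = (+) (\<phi> y) ` \<phi> ` W \<longleftrightarrow> (+) x ` W = (+) y ` W"
      by (simp add: coset_eq_iff sW s\<phi>W)
  qed
  finally show ?thesis .
qed

lemma bij_betw_findex_submods: "bij_betw ((`) \<phi>) {W. findex_submod m W} (findex_submods m L)"
  unfolding bij_betw_def
proof
  show "inj_on ((`) \<phi>) {W. findex_submod m W}"
    using inj unfolding findex_submod_def submod_def by (auto simp: inj_on_def inj_on_image_eq_iff)
  show "(`) \<phi> ` {W. findex_submod m W} = findex_submods m L"
  proof (intro equalityI subsetI)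
    fix V assume "V \<in> (`) \<phi> ` {W. findex_submod m W}"
    then obtain W where "findex_submod m W" "V = \<phi> ` W" by blast
    then show "V \<in> findex_submods m L"
      using mindex_image submod_image mindex_pos[OF L] image
      unfolding findex_submods_def findex_submod_iff_mindex submod_def by auto
  next
    fix V assume "V \<in> findex_submods m L"
    then have V: "findex_submod m V" "V \<subseteq> L" unfolding findex_submods_def by auto
    define W where "W = {x \<in> fvec m. \<phi> x \<in> V}"
    have "\<phi> ` W = V" using V(2) image unfolding W_def by blast
    have "submod m W"
      unfolding submod_iff
    proof (intro conjI ballI allI)
      show "W \<subseteq> fvec m" unfolding W_def by blast
      show "0 \<in> W"
        using zero V(1) unfolding W_def findex_submod_def submod_iff by (simp add: fvec_def)
      show "x + y \<in> W" if "x \<in> W" "y \<in> W" for x y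
      proof -
        have "x \<in> fvec m" "y \<in> fvec m" "\<phi> x \<in> V" "\<phi> y \<in> V" using that unfolding W_def by auto
        moreover have "x + y \<in> fvec m" using calculation add_subgroup_fvec unfolding add_subgroup_def by blast
        ultimately show ?thesis using add V(1) unfolding W_def findex_submod_def submod_iff by simp
      qed
      show "(\<lambda>i. c * x i) \<in> W" if "x \<in> W" for c x
        using that scale V(1) unfolding W_def findex_submod_def submod_iff by (auto simp: fvec_def)
    qed
    then have "findex_submod m W"
      using mindex_image[OF \<open>submod m W\<close>] \<open>\<phi> ` W = V\<close> mindex_pos[OF V(1)]
      by (simp add: findex_submod_iff_mindex)
    then show "V \<in> (`) \<phi> ` {W. findex_submod m W}" using \<open>\<phi> ` W = V\<close> by blast
  qed
qed

lemma infsum_findex_submods: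
  fixes G :: "nat \<Rightarrow> 'b::{t2_space, topological_semigroup_mult, division_ring}"
  assumes mult: "\<And>a b. a > 0 \<Longrightarrow> b > 0 \<Longrightarrow> G (a * b) = G a * G b"
  shows "(\<Sum>\<^sub>\<infinity>V\<in>findex_submods m L. G (mindex m V))
       = G (mindex m L) * (\<Sum>\<^sub>\<infinity>W\<in>{W :: (nat \<Rightarrow> 'a) set. findex_submod m W}. G (mindex m W))"
proof -
  have "(\<Sum>\<^sub>\<infinity>V\<in>findex_submods m L. G (mindex m V))
      = (\<Sum>\<^sub>\<infinity>W\<in>{W. findex_submod m W}. G (mindex m (\<phi> ` W)))"
    by (rule infsum_reindex_bij_betw[OF bij_betw_findex_submods, symmetric])
  also have "\<dots> = (\<Sum>\<^sub>\<infinity>W\<in>{W :: (nat \<Rightarrow> 'a) set. findex_submod m W}. G (mindex m L) * G (mindex m W))"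
  proof (rule infsum_cong)
    fix W :: "(nat \<Rightarrow> 'a) set" assume "W \<in> {W. findex_submod m W}"
    then have W: "findex_submod m W" by simp
    then show "G (mindex m (\<phi> ` W)) = G (mindex m L) * G (mindex m W)"
      using mindex_image[of W] mult[OF mindex_pos[OF L] mindex_pos[OF W]]
      unfolding findex_submod_def by simp
  qed
  also have "\<dots> = G (mindex m L) * (\<Sum>\<^sub>\<infinity>W\<in>{W :: (nat \<Rightarrow> 'a) set. findex_submod m W}. G (mindex m W))"
    by (rule infsum_cmult_right')
  finally show ?thesis .
qed

end

lemma infsum_findex_submods_mult:
  fixes L :: "(nat \<Rightarrow> 'a::idom) set" and G :: "nat \<Rightarrow> 'b::{t2_space, topological_semigroup_mult, division_ring}"
  assumes "uniformizer (p::'a)" and L: "findex_submod m L"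
    and mult: "\<And>a b. a > 0 \<Longrightarrow> b > 0 \<Longrightarrow> G (a * b) = G a * G b"
  shows "(\<Sum>\<^sub>\<infinity>V\<in>findex_submods m L. G (mindex m V))
       = G (mindex m L) * (\<Sum>\<^sub>\<infinity>W\<in>{W :: (nat \<Rightarrow> 'a) set. findex_submod m W}. G (mindex m W))"
proof -
  obtain \<phi> where "fvec_linear m \<phi>" "inj_on \<phi> (fvec m)" "\<phi> ` fvec m = L"
    using findex_submod_free[OF assms(1) L] by blast
  then interpret free_parametrization m L \<phi> using L by unfold_locales
  show ?thesis using infsum_findex_submods[OF mult] .
qed

section \<open>Absolute convergence\<close>

lemma submod_Suc_subset:
  fixes U V :: "(nat \<Rightarrow> 'a::comm_ring_1) set"
  assumes U: "submod (Suc m) U" and V: "submod (Suc m) V" and UV: "U \<inter> fvec m \<subseteq> V"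
    and u: "u \<in> U" "u \<in> V" and dvd: "\<forall>x\<in>U. u m dvd x m"
  shows "U \<subseteq> V"
proof
  fix w assume w: "w \<in> U"
  obtain s where s: "w m = u m * s" using dvd w by (meson dvdE)
  have su: "(\<lambda>i. s * u i) \<in> U" "(\<lambda>i. s * u i) \<in> V" using U V u unfolding submod_def by blast+
  then have "w - (\<lambda>i. s * u i) \<in> U" using w add_subgroup_diff[OF add_subgroup_if_submod[OF U]] by blast
  moreover have "w - (\<lambda>i. s * u i) \<in> fvec m"
  proof (rule fvec_Suc_iff[THEN iffD2, OF conjI])
    show "w - (\<lambda>i. s * u i) \<in> fvec (Suc m)" using calculation U unfolding submod_def by blast
    show "(w - (\<lambda>i. s * u i)) m = 0" using s by (simp add: mult.commute)
  qed
  ultimately have "w - (\<lambda>i. s * u i) \<in> V" using UV by blast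
  then have "(w - (\<lambda>i. s * u i)) + (\<lambda>i. s * u i) \<in> V"
    using su(2) add_subgroup_if_submod[OF V] unfolding add_subgroup_def by blast
  then show "w \<in> V" by simp
qed

text \<open>The last pivot of a Hermite normal form of U; the rest of its row is only determined modulo U \<inter> o^m.\<close>

definition hermite_data ::
  "'a::idom \<Rightarrow> nat \<Rightarrow> (nat \<Rightarrow> 'a) set \<Rightarrow> ((nat \<Rightarrow> 'a) set \<times> nat) \<times> (nat \<Rightarrow> 'a) set \<Rightarrow> bool" where
  "hermite_data p m U = (\<lambda>((U', j), C). U' = U \<inter> fvec m \<and>
     (\<exists>u\<in>U. u m = p ^ j \<and> (\<forall>x\<in>U. p ^ j dvd x m) \<and> C = (+) (u(m := 0)) ` U'))"

lemma hermite_data_exists: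
  fixes U :: "(nat \<Rightarrow> 'a::idom) set"
  assumes "uniformizer (p::'a)" "findex_submod (Suc m) U"
  shows "\<exists>t. hermite_data p m U t"
proof -
  obtain j u where "u \<in> U" "u m = p ^ j" "\<forall>x\<in>U. p ^ j dvd x m"
    using last_coordinate_generator[OF assms] .
  then have "hermite_data p m U ((U \<inter> fvec m, j), (+) (u(m := 0)) ` (U \<inter> fvec m))"
    unfolding hermite_data_def by auto
  then show ?thesis ..
qed

lemma hermite_data_subset:
  fixes U V :: "(nat \<Rightarrow> 'a::idom) set"
  assumes U: "findex_submod (Suc m) U" and V: "findex_submod (Suc m) V"
    and "hermite_data p m U t" "hermite_data p m V t"
  shows "U \<subseteq> V"
proof -
  obtain U' j C where t: "t = ((U', j), C)" by (metis prod.collapse)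
  have "U' = U \<inter> fvec m \<and> (\<exists>u\<in>U. u m = p ^ j \<and> (\<forall>x\<in>U. p ^ j dvd x m) \<and> C = (+) (u(m := 0)) ` U')"
    "U' = V \<inter> fvec m \<and> (\<exists>v\<in>V. v m = p ^ j \<and> (\<forall>x\<in>V. p ^ j dvd x m) \<and> C = (+) (v(m := 0)) ` U')"
    using assms(3,4) unfolding t hermite_data_def prod.case by blast+
  then obtain u v where u: "u \<in> U" "u m = p ^ j" "\<forall>x\<in>U. p ^ j dvd x m" "C = (+) (u(m := 0)) ` U'"
    and v: "v \<in> V" "v m = p ^ j" "C = (+) (v(m := 0)) ` U'"
    and U': "U' = U \<inter> fvec m" "U' = V \<inter> fvec m"
    by blast
  have sU: "submod (Suc m) U" and sV: "submod (Suc m) V"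
    using U V unfolding findex_submod_def by auto
  \<comment> \<open>u and v differ by an element of U' because they lie in the same coset of U' and agree at m\<close>
  have "add_subgroup U'" unfolding U'(2) using submod_Int_fvec[OF sV] by (rule add_subgroup_if_submod)
  then have "u(m := 0) - v(m := 0) \<in> U'" using u(4) v(3) coset_eq_iff by blast
  moreover have "u(m := 0) - v(m := 0) = u - v" using u(2) v(2) by (auto simp: fun_eq_iff)
  ultimately have "u - v \<in> V" using U'(2) by (metis IntD1)
  then have "(u - v) + v \<in> V" using v(1) add_subgroup_if_submod[OF sV] unfolding add_subgroup_def by blast
  then have "u \<in> V" by simp
  then show ?thesis using submod_Suc_subset[OF sU sV _ u(1)] u(2,3) U' by auto
qed

lemma hermite_data_index:
  fixes U :: "(nat \<Rightarrow> 'a::idom) set"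
  assumes U: "findex_submod (Suc m) U" and "hermite_data p m U ((U', j), C)"
  shows "findex_submod m U'" "C \<in> cosets_in (fvec m) U'"
    and "mindex (Suc m) U = mindex m U' * residue_card p j"
proof -
  have "U' = U \<inter> fvec m \<and> (\<exists>u\<in>U. u m = p ^ j \<and> (\<forall>x\<in>U. p ^ j dvd x m) \<and> C = (+) (u(m := 0)) ` U')"
    using assms(2) unfolding hermite_data_def prod.case .
  then obtain u where u: "u \<in> U" "u m = p ^ j" "\<forall>x\<in>U. p ^ j dvd x m" "C = (+) (u(m := 0)) ` U'"
    and U': "U' = U \<inter> fvec m"
    by blast
  show "findex_submod m U'" unfolding U' using findex_submod_Int_fvec[OF U u(1-3)] .
  have "u \<in> fvec (Suc m)" using U u(1) unfolding findex_submod_def submod_def by blast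
  then show "C \<in> cosets_in (fvec m) U'"
    unfolding u(4) cosets_in_def using fun_upd_last_in_fvec by blast
  show "mindex (Suc m) U = mindex m U' * residue_card p j"
    unfolding U' using mindex_Suc[OF _ u(1-3)] U by (simp add: findex_submod_def)
qed

lemma summable_on_Sigma_geometric:
  fixes n :: "'b \<Rightarrow> nat" and K :: "'b \<Rightarrow> 'c set" and q :: nat and \<sigma> :: real
  assumes K: "\<And>U. U \<in> F \<Longrightarrow> finite (K U) \<and> card (K U) = n U"
    and n: "(\<lambda>U. real (n U) powr (1 - \<sigma>)) summable_on F" and q: "q \<ge> 2" and \<sigma>: "\<sigma> > 0"
  shows "(\<lambda>((U, j), C). (real (n U) * real q ^ j) powr (- \<sigma>)) summable_on Sigma (F \<times> UNIV) (\<lambda>(U, j). K U)"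
proof -
  define r where "r = real q powr (- \<sigma>)"
  have "r < 1" unfolding r_def using q \<sigma> by (intro powr_less_one) auto
  then have "summable (\<lambda>j. r ^ j)" by (simp add: r_def)
  then have "((\<lambda>j. r ^ j) has_sum (\<Sum>\<^sub>\<infinity>j. r ^ j)) UNIV"
    by (subst (asm) summable_on_UNIV_nonneg_real_iff[symmetric]) (auto simp: r_def)
  have weight: "real k * (real k * real q ^ j) powr (- \<sigma>) = real k powr (1 - \<sigma>) * r ^ j" for k j
  proof (cases "k = 0")
    case False
    have "(real q ^ j) powr (- \<sigma>) = r ^ j"
      using q by (simp add: r_def powr_realpow[symmetric] powr_powr powr_power mult.commute)
    then show ?thesis using False by (simp add: powr_mult powr_mult_base)
  qed simp
  have "(\<lambda>(U, j). real (n U) powr (1 - \<sigma>) * r ^ j) summable_on Sigma F (\<lambda>_. UNIV)"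
  proof (rule summable_on_SigmaI)
    show "((\<lambda>j. case (U, j) of (U, j) \<Rightarrow> real (n U) powr (1 - \<sigma>) * r ^ j)
        has_sum real (n U) powr (1 - \<sigma>) * (\<Sum>\<^sub>\<infinity>j. r ^ j)) UNIV" for U
      using \<open>((\<lambda>j. r ^ j) has_sum _) UNIV\<close> by (simp add: has_sum_cmult_right)
    show "(\<lambda>U. real (n U) powr (1 - \<sigma>) * (\<Sum>\<^sub>\<infinity>j. r ^ j)) summable_on F"
      using n by (rule summable_on_cmult_left)
  qed (simp add: r_def)
  moreover have "((\<lambda>C. (real (n U) * real q ^ j) powr (- \<sigma>))
      has_sum real (n U) powr (1 - \<sigma>) * r ^ j) (K U)" if "U \<in> F" for U j
    using has_sum_constant[of "K U" "(real (n U) * real q ^ j) powr (- \<sigma>)"] K[OF that] weight by simp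
  ultimately show ?thesis
    by (intro summable_on_SigmaI[where g = "\<lambda>(U, j). real (n U) powr (1 - \<sigma>) * r ^ j"]) auto
qed

definition hermite_code :: "'a::idom \<Rightarrow> nat \<Rightarrow> (nat \<Rightarrow> 'a) set \<Rightarrow> ((nat \<Rightarrow> 'a) set \<times> nat) \<times> (nat \<Rightarrow> 'a) set" where
  "hermite_code p m U = Eps (hermite_data p m U)"

lemma hermite_data_hermite_code:
  "uniformizer p \<Longrightarrow> findex_submod (Suc m) U \<Longrightarrow> hermite_data p m U (hermite_code p m U)"
  unfolding hermite_code_def by (rule someI_ex) (rule hermite_data_exists)

lemma inj_on_hermite_code:
  fixes p :: "'a::idom"
  assumes "uniformizer p"
  shows "inj_on (hermite_code p m) {U :: (nat \<Rightarrow> 'a) set. findex_submod (Suc m) U}"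
  by (rule inj_onI) (metis assms hermite_data_hermite_code hermite_data_subset mem_Collect_eq subset_antisym)

lemma hermite_code_index:
  fixes U :: "(nat \<Rightarrow> 'a::idom) set"
  assumes p: "uniformizer p" and U: "findex_submod (Suc m) U"
  shows "hermite_code p m U \<in> Sigma ({U'. findex_submod m U'} \<times> UNIV) (\<lambda>(U', j). cosets_in (fvec m) U')"
    and "mindex (Suc m) U = (case hermite_code p m U of ((U', j), C) \<Rightarrow> mindex m U' * residue_card p 1 ^ j)"
proof -
  obtain U' j C where t: "hermite_code p m U = ((U', j), C)" by (metis prod.collapse)
  then have "hermite_data p m U ((U', j), C)" using hermite_data_hermite_code[OF p U] by simp
  note index = hermite_data_index[OF U this]
  show "hermite_code p m U \<in> Sigma ({U'. findex_submod m U'} \<times> UNIV) (\<lambda>(U', j). cosets_in (fvec m) U')"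
    unfolding t using index by simp
  show "mindex (Suc m) U = (case hermite_code p m U of ((U', j), C) \<Rightarrow> mindex m U' * residue_card p 1 ^ j)"
    unfolding t using index residue_card_power[OF p, of j] by simp
qed

lemma summable_mindex_powr:
  fixes p :: "'a::idom"
  assumes p: "uniformizer p" and q: "finite (cosets_in UNIV {x. p dvd x})"
  shows "\<sigma> > real m \<Longrightarrow>
    (\<lambda>U :: (nat \<Rightarrow> 'a) set. real (mindex m U) powr (- \<sigma>)) summable_on {U. findex_submod m U}"
proof (induction m arbitrary: \<sigma>)
  case 0
  have "fvec 0 = {0 :: nat \<Rightarrow> 'a}" unfolding fvec_def by auto
  then have "{U :: (nat \<Rightarrow> 'a) set. findex_submod 0 U} \<subseteq> Pow {0}"
    unfolding findex_submod_def submod_def by auto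
  then show ?case by (intro summable_on_finite) (simp add: finite_subset)
next
  case (Suc m)
  let ?F = "{U :: (nat \<Rightarrow> 'a) set. findex_submod (Suc m) U}"
  let ?h = "\<lambda>((U, j), C). (real (mindex m U) * real (residue_card p 1) ^ j) powr (- \<sigma>)"
  let ?\<Psi> = "hermite_code p m"
  have "?h summable_on Sigma ({U' :: (nat \<Rightarrow> 'a) set. findex_submod m U'} \<times> UNIV)
      (\<lambda>(U', j). cosets_in (fvec m) U')"
  proof (rule summable_on_Sigma_geometric)
    \<comment> \<open>each U' carries |o^m : U'| cosets, which costs one in the exponent\<close>
    show "(\<lambda>U :: (nat \<Rightarrow> 'a) set. real (mindex m U) powr (1 - \<sigma>)) summable_on {U. findex_submod m U}"
      using Suc.IH[of "\<sigma> - 1"] Suc.prems by simp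
    show "residue_card p 1 \<ge> 2" using residue_card_ge_2[OF p q] .
  qed (use Suc.prems in \<open>auto simp: findex_submod_def mindex_eq_card cosets_eq_cosets_in\<close>)
  then have "?h summable_on ?\<Psi> ` ?F"
    by (rule summable_on_subset_banach) (use hermite_code_index(1)[OF p] in blast)
  then have "(?h \<circ> ?\<Psi>) summable_on ?F"
    using summable_on_reindex[OF inj_on_hermite_code[OF p]] by blast
  moreover have "(?h \<circ> ?\<Psi>) U = real (mindex (Suc m) U) powr (- \<sigma>)" if "U \<in> ?F" for U
    using hermite_code_index(2)[OF p, of m U] that by (simp split: prod.splits)
  ultimately show ?case
    by (rule summable_on_cong[THEN iffD1, rotated])
qed

section \<open>The dual star quiver\<close>

lemma abs_summable_on_prod_PiE:
  fixes f :: "'i \<Rightarrow> 'b \<Rightarrow> 'c::{banach, real_normed_field}"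
  assumes "finite A" and "\<And>x. x \<in> A \<Longrightarrow> (\<lambda>y. norm (f x y)) summable_on B x"
  shows "(\<lambda>g. norm (\<Prod>x\<in>A. f x (g x))) summable_on PiE A B"
  using assms
proof (induction A rule: finite_induct)
  case (insert x A)
  have PiE: "PiE (insert x A) B = (\<lambda>(g, y). g(x := y)) ` (PiE A B \<times> B x)"
    unfolding PiE_insert_eq by (subst swap_product [symmetric]) (simp add: image_image case_prod_unfold)
  have inj: "inj_on (\<lambda>(g, y). g(x := y)) (PiE A B \<times> B x)"
    using \<open>x \<notin> A\<close> by (rule inj_combinator')
  have "(\<Prod>z\<in>A. f z ((g(x := y)) z)) = (\<Prod>z\<in>A. f z (g z))" for g y
    using insert.hyps by (intro prod.cong) auto
  then have prod: "(\<Prod>z\<in>insert x A. f z ((g(x := y)) z)) = f x y * (\<Prod>z\<in>A. f z (g z))" for g y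
    using insert.hyps by simp
  have "(\<lambda>(g, y). norm (\<Prod>z\<in>A. f z (g z)) * norm (f x y)) summable_on PiE A B \<times> B x"
  proof (rule summable_on_SigmaI)
    show "((\<lambda>y. case (g, y) of (g, y) \<Rightarrow> norm (\<Prod>z\<in>A. f z (g z)) * norm (f x y))
        has_sum norm (\<Prod>z\<in>A. f z (g z)) * (\<Sum>\<^sub>\<infinity>y\<in>B x. norm (f x y))) (B x)" for g
      using insert.prems by (simp add: has_sum_cmult_right)
    show "(\<lambda>g. norm (\<Prod>z\<in>A. f z (g z)) * (\<Sum>\<^sub>\<infinity>y\<in>B x. norm (f x y))) summable_on PiE A B"
      using insert.IH insert.prems by (intro summable_on_cmult_left) auto
  qed auto
  moreover have "(\<lambda>h. norm (\<Prod>z\<in>insert x A. f z (h z))) \<circ> (\<lambda>(g, y). g(x := y))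
      = (\<lambda>(g, y). norm (\<Prod>z\<in>A. f z (g z)) * norm (f x y))"
    by (rule ext) (simp only: comp_apply split_beta prod norm_mult mult.commute)
  ultimately have "(\<lambda>h. norm (\<Prod>z\<in>insert x A. f z (h z))) summable_on (\<lambda>(g, y). g(x := y)) ` (PiE A B \<times> B x)"
    by (simp add: summable_on_reindex[OF inj])
  then show ?case unfolding PiE .
qed simp

lemma abs_summable_on_Sigma_PiE_self_similar:
  fixes g :: "'b \<Rightarrow> 'c::{banach, real_normed_field}"
  assumes I: "finite I" and S: "\<And>L. L \<in> F \<Longrightarrow> S L \<subseteq> F"
    and abs: "(\<lambda>V. norm (g V)) summable_on F"
    and norm_sum_S: "\<And>L. L \<in> F \<Longrightarrow> (\<Sum>\<^sub>\<infinity>V\<in>S L. norm (g V)) = norm (g L) * (\<Sum>\<^sub>\<infinity>V\<in>F. norm (g V))"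
    and h: "\<And>L. L \<in> F \<Longrightarrow> g L ^ Suc (card I) = h L" and abs_h: "(\<lambda>L. norm (h L)) summable_on F"
  shows "(\<lambda>t. norm ((\<lambda>(L, f). g L * (\<Prod>i\<in>I. g (f i))) t)) summable_on Sigma F (\<lambda>L. PiE I (\<lambda>_. S L))"
proof -
  have abs_S: "(\<lambda>V. norm (g V)) summable_on S L" if "L \<in> F" for L
    using abs S[OF that] by (rule summable_on_subset_banach)
  have inner: "(\<Sum>\<^sub>\<infinity>f\<in>PiE I (\<lambda>_. S L). norm (g L * (\<Prod>i\<in>I. g (f i))))
      = norm (h L) * (\<Sum>\<^sub>\<infinity>V\<in>F. norm (g V)) ^ card I" if "L \<in> F" for L
  proof -
    have "(\<Sum>\<^sub>\<infinity>f\<in>PiE I (\<lambda>_. S L). norm (g L * (\<Prod>i\<in>I. g (f i))))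
        = norm (g L) * (\<Prod>i\<in>I. \<Sum>\<^sub>\<infinity>V\<in>S L. norm (g V))"
      using infsum_prod_PiE_abs[OF I, of "\<lambda>_ V. norm (g V)"] abs_S[OF that]
      by (simp add: norm_mult prod_norm infsum_cmult_right')
    then show ?thesis
      using norm_sum_S[OF that] h[OF that, symmetric] I by (simp add: power_mult_distrib norm_mult norm_power)
  qed
  show ?thesis
  proof (subst Infinite_Sum.abs_summable_on_Sigma_iff, intro conjI ballI)
    fix L assume "L \<in> F"
    then show "(\<lambda>f. norm ((\<lambda>(L, f). g L * (\<Prod>i\<in>I. g (f i))) (L, f))) summable_on PiE I (\<lambda>_. S L)"
      using abs_summable_on_prod_PiE[OF I, of "\<lambda>_. g"] abs_S
      by (simp add: norm_mult summable_on_cmult_right)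
  next
    have "(\<lambda>L. norm (h L) * (\<Sum>\<^sub>\<infinity>V\<in>F. norm (g V)) ^ card I) summable_on F"
      using abs_h by (rule summable_on_cmult_left)
    moreover have "norm (h L) * (\<Sum>\<^sub>\<infinity>V\<in>F. norm (g V)) ^ card I
        = norm (\<Sum>\<^sub>\<infinity>f\<in>PiE I (\<lambda>_. S L). norm ((\<lambda>(L, f). g L * (\<Prod>i\<in>I. g (f i))) (L, f)))"
      if "L \<in> F" for L
      using inner[OF that] infsum_nonneg[of F "\<lambda>V. norm (g V)"] by simp
    ultimately show "(\<lambda>L. norm (\<Sum>\<^sub>\<infinity>f\<in>PiE I (\<lambda>_. S L).
        norm ((\<lambda>(L, f). g L * (\<Prod>i\<in>I. g (f i))) (L, f)))) summable_on F"
      by (rule summable_on_cong[THEN iffD1, rotated])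
  qed
qed

lemma infsum_Sigma_PiE_self_similar:
  fixes g :: "'b \<Rightarrow> 'c::{banach, real_normed_field}"
  assumes I: "finite I" and S: "\<And>L. L \<in> F \<Longrightarrow> S L \<subseteq> F"
    and abs: "(\<lambda>V. norm (g V)) summable_on F"
    and sum_S: "\<And>L. L \<in> F \<Longrightarrow> infsum g (S L) = g L * infsum g F"
    and norm_sum_S: "\<And>L. L \<in> F \<Longrightarrow> (\<Sum>\<^sub>\<infinity>V\<in>S L. norm (g V)) = norm (g L) * (\<Sum>\<^sub>\<infinity>V\<in>F. norm (g V))"
    and h: "\<And>L. L \<in> F \<Longrightarrow> g L ^ Suc (card I) = h L" and abs_h: "(\<lambda>L. norm (h L)) summable_on F"
  shows "(\<Sum>\<^sub>\<infinity>(L, f)\<in>Sigma F (\<lambda>L. PiE I (\<lambda>_. S L)). g L * (\<Prod>i\<in>I. g (f i)))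
       = infsum h F * infsum g F ^ card I"
proof -
  have inner: "(\<Sum>\<^sub>\<infinity>f\<in>PiE I (\<lambda>_. S L). g L * (\<Prod>i\<in>I. g (f i))) = h L * infsum g F ^ card I"
    if "L \<in> F" for L
  proof -
    have "(\<lambda>V. norm (g V)) summable_on S L"
      using abs S[OF that] by (rule summable_on_subset_banach)
    then have "(\<Sum>\<^sub>\<infinity>f\<in>PiE I (\<lambda>_. S L). g L * (\<Prod>i\<in>I. g (f i))) = g L * (\<Prod>i\<in>I. infsum g (S L))"
      using infsum_prod_PiE_abs[OF I, of "\<lambda>_. g"] by (simp add: infsum_cmult_right')
    then show ?thesis using sum_S[OF that] h[OF that] I by (simp add: power_mult_distrib)
  qed
  let ?w = "\<lambda>(L, f). g L * (\<Prod>i\<in>I. g (f i))"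
  have "?w summable_on Sigma F (\<lambda>L. PiE I (\<lambda>_. S L))"
    by (rule abs_summable_summable, rule abs_summable_on_Sigma_PiE_self_similar[where h = h])
       (use assms in auto)
  then have "infsum ?w (Sigma F (\<lambda>L. PiE I (\<lambda>_. S L))) = (\<Sum>\<^sub>\<infinity>L\<in>F. \<Sum>\<^sub>\<infinity>f\<in>PiE I (\<lambda>_. S L). ?w (L, f))"
    by (rule infsum_Sigma_banach[symmetric])
  also have "\<dots> = (\<Sum>\<^sub>\<infinity>L\<in>F. h L * infsum g F ^ card I)"
    by (rule infsum_cong) (simp add: inner)
  finally show ?thesis by (simp add: infsum_cmult_left')
qed

lemma infsum_findex_submods_powr:
  fixes L :: "(nat \<Rightarrow> 'a::idom) set"
  assumes "uniformizer (p::'a)" and "findex_submod m L"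
  shows "(\<Sum>\<^sub>\<infinity>V\<in>findex_submods m L. (of_nat (mindex m V) :: complex) powr (- s))
      = of_nat (mindex m L) powr (- s) * (\<Sum>\<^sub>\<infinity>W\<in>{W :: (nat \<Rightarrow> 'a) set. findex_submod m W}. of_nat (mindex m W) powr (- s))"
    and "(\<Sum>\<^sub>\<infinity>V\<in>findex_submods m L. real (mindex m V) powr (- \<sigma>))
      = real (mindex m L) powr (- \<sigma>) * (\<Sum>\<^sub>\<infinity>W\<in>{W :: (nat \<Rightarrow> 'a) set. findex_submod m W}. real (mindex m W) powr (- \<sigma>))"
  using assms by (auto intro!: infsum_findex_submods_mult simp: powr_times_real powr_mult)

lemma dual_star_subreps_bij:
  assumes "a \<ge> 1"
  shows "bij_betw (\<lambda>(L, f) i. if i = 0 then L else if i < a then f i else {})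
     (Sigma {L. findex_submod m L} (\<lambda>L. PiE {1..<a} (\<lambda>_. findex_submods m L)))
     {\<Lambda>. fi_subrep a {1..<a} (\<lambda>j. j) (\<lambda>j. 0) (\<lambda>i. m) (\<lambda>j (x::nat \<Rightarrow> 'a::comm_ring_1). x) \<Lambda>}"
proof (rule bij_betw_byWitness[where f' = "\<lambda>\<Lambda>. (\<Lambda> 0, restrict \<Lambda> {1..<a})"])
  show "\<forall>t\<in>Sigma {L. findex_submod m L} (\<lambda>L. PiE {1..<a} (\<lambda>_. findex_submods m L)).
      (\<lambda>\<Lambda>. (\<Lambda> 0, restrict \<Lambda> {1..<a})) ((\<lambda>(L, f) i. if i = 0 then L else if i < a then f i else {}) t) = t"
    by (auto simp: fun_eq_iff PiE_def extensional_def)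
  show "\<forall>\<Lambda>\<in>{\<Lambda>. fi_subrep a {1..<a} (\<lambda>j. j) (\<lambda>j. 0) (\<lambda>i. m) (\<lambda>j (x::nat \<Rightarrow> 'a). x) \<Lambda>}.
      (\<lambda>(L, f) i. if i = 0 then L else if i < a then f i else {}) ((\<lambda>\<Lambda>. (\<Lambda> 0, restrict \<Lambda> {1..<a})) \<Lambda>) = \<Lambda>"
    by (auto simp: fun_eq_iff fi_subrep_def)
  show "(\<lambda>(L, f) i. if i = 0 then L else if i < a then f i else {}) `
      Sigma {L. findex_submod m L} (\<lambda>L. PiE {1..<a} (\<lambda>_. findex_submods m L))
      \<subseteq> {\<Lambda>. fi_subrep a {1..<a} (\<lambda>j. j) (\<lambda>j. 0) (\<lambda>i. m) (\<lambda>j (x::nat \<Rightarrow> 'a). x) \<Lambda>}"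
    using assms by (auto simp: fi_subrep_def findex_submods_def PiE_def Pi_def) blast
  show "(\<lambda>\<Lambda>. (\<Lambda> 0, restrict \<Lambda> {1..<a})) `
      {\<Lambda>. fi_subrep a {1..<a} (\<lambda>j. j) (\<lambda>j. 0) (\<lambda>i. m) (\<lambda>j (x::nat \<Rightarrow> 'a). x) \<Lambda>}
      \<subseteq> Sigma {L. findex_submod m L} (\<lambda>L. PiE {1..<a} (\<lambda>_. findex_submods m L))"
    using assms by (auto simp: fi_subrep_def findex_submods_def) (meson atLeastLessThan_iff subsetD)
qed

lemma zeta_dual_star_eq_infsum_Sigma:
  assumes "a \<ge> 1"
  shows "zeta_dual_star TYPE('a::comm_ring_1) m a s
    = (\<Sum>\<^sub>\<infinity>(L, f)\<in>Sigma {L :: (nat \<Rightarrow> 'a) set. findex_submod m L} (\<lambda>L. PiE {1..<a} (\<lambda>_. findex_submods m L)).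
         (of_nat (mindex m L) :: complex) powr (- s) * (\<Prod>i\<in>{1..<a}. of_nat (mindex m (f i)) powr (- s)))"
proof -
  define w where "w V = (of_nat (mindex m V) :: complex) powr (- s)" for V :: "(nat \<Rightarrow> 'a) set"
  define \<beta> where "\<beta> = (\<lambda>(L, f) i. if i = 0 then L else if i < a then f i else ({} :: (nat \<Rightarrow> 'a) set))"
  have "{..<a} = insert 0 {1..<a}" using assms by auto
  then have prod: "(\<Prod>i<a. w (\<beta> t i)) = (case t of (L, f) \<Rightarrow> w L * (\<Prod>i\<in>{1..<a}. w (f i)))" for t
    unfolding \<beta>_def by (auto simp: case_prod_unfold intro!: prod.cong)
  have "zeta_dual_star TYPE('a) m a s
      = (\<Sum>\<^sub>\<infinity>\<Lambda>\<in>{\<Lambda>. fi_subrep a {1..<a} (\<lambda>j. j) (\<lambda>j. 0) (\<lambda>i. m) (\<lambda>j (x::nat \<Rightarrow> 'a). x) \<Lambda>}.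
          \<Prod>i<a. w (\<Lambda> i))"
    unfolding zeta_dual_star_def zeta_rep_def w_def ..
  also have "\<dots> = (\<Sum>\<^sub>\<infinity>t\<in>Sigma {L. findex_submod m L} (\<lambda>L. PiE {1..<a} (\<lambda>_. findex_submods m L)).
      \<Prod>i<a. w (\<beta> t i))"
    unfolding \<beta>_def by (rule infsum_reindex_bij_betw[OF dual_star_subreps_bij[OF assms], symmetric])
  also have "\<dots> = (\<Sum>\<^sub>\<infinity>(L, f)\<in>Sigma {L. findex_submod m L} (\<lambda>L. PiE {1..<a} (\<lambda>_. findex_submods m L)).
      w L * (\<Prod>i\<in>{1..<a}. w (f i)))"
    by (rule infsum_cong) (rule prod)
  finally show ?thesis unfolding w_def .
qed

theorem proposition3p9:
  fixes m a :: nat and s :: complex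
  assumes "is_dvr TYPE('a::idom)"
    and "is_compact_dvr TYPE('a)"
    and "a \<ge> 1"
    and "Re s > real m"
  shows "zeta_dual_star TYPE('a) m a s
           = zeta_free TYPE('a) m (of_nat a * s) * zeta_free TYPE('a) m s ^ (a - 1)"
proof -
  obtain p :: 'a where p: "uniformizer p" and "compact_space (adic_topology p)"
    using assms(2) unfolding is_compact_dvr_def by blast
  then have q: "finite (cosets_in UNIV {x. p dvd x})" using finite_residue_field by blast
  define F where "F = {U :: (nat \<Rightarrow> 'a) set. findex_submod m U}"
  define g where "g z U = (of_nat (mindex m U) :: complex) powr (- z)" for z and U :: "(nat \<Rightarrow> 'a) set"
  have norm_g: "norm (g z U) = real (mindex m U) powr (- Re z)" for z U
    unfolding g_def by (simp add: norm_powr_real_powr)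
  have "real m < Re (of_nat a * s)" using assms(3,4) by (simp add: less_le_trans mult_le_cancel_right1)
  have "zeta_dual_star TYPE('a) m a s
      = (\<Sum>\<^sub>\<infinity>(L, f)\<in>Sigma F (\<lambda>L. PiE {1..<a} (\<lambda>_. findex_submods m L)). g s L * (\<Prod>i\<in>{1..<a}. g s (f i)))"
    unfolding F_def g_def by (rule zeta_dual_star_eq_infsum_Sigma[OF assms(3)])
  also have "\<dots> = infsum (g (of_nat a * s)) F * infsum (g s) F ^ card {1..<a}"
  proof (rule infsum_Sigma_PiE_self_similar)
    have "(\<lambda>V. norm (g z V)) summable_on F" if "real m < Re z" for z
      unfolding norm_g F_def using summable_mindex_powr[OF p q that] .
    then show "(\<lambda>V. norm (g s V)) summable_on F" "(\<lambda>V. norm (g (of_nat a * s) V)) summable_on F"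
      using assms(4) \<open>real m < Re (of_nat a * s)\<close> by blast+
    show "findex_submods m L \<subseteq> F" for L unfolding findex_submods_def F_def by blast
    show "infsum (g s) (findex_submods m L) = g s L * infsum (g s) F" if "L \<in> F" for L
      using infsum_findex_submods_powr(1)[OF p] that unfolding g_def F_def by simp
    show "(\<Sum>\<^sub>\<infinity>V\<in>findex_submods m L. norm (g s V)) = norm (g s L) * (\<Sum>\<^sub>\<infinity>V\<in>F. norm (g s V))"
      if "L \<in> F" for L
      using infsum_findex_submods_powr(2)[OF p] that unfolding norm_g F_def by simp
    show "g s L ^ Suc (card {1..<a}) = g (of_nat a * s) L" if "L \<in> F" for L
      using mindex_pos[of m L] that assms(3) unfolding g_def F_def by (simp add: powr_power)
  qed simp
  also have "\<dots> = zeta_free TYPE('a) m (of_nat a * s) * zeta_free TYPE('a) m s ^ (a - 1)"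
    unfolding zeta_free_def F_def g_def by simp
  finally show ?thesis .
qed

end
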